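(* Under the standing assumptions below, $\sum_{i=1}^\infty\frac{a_i\pi_i}{a_i+a_j}=1$ for every $j\in\mathbb{N}$.
   Context: Standing assumptions: $X$ is one of $\ell^p$ ($1\le p\le\infty$), $c$, $c_0$; $(a_n)$ strictly decreasing positive reals, $a_n\to0$; $b=(b_n)\in X$ with $b_n>0$; $\pi_n:=2\prod_{m\ge1,\,m\ne n}\frac{1+a_m/a_n}{1-a_m/a_n}$ with $\pi\in\ell^\infty$; $\phi_{ij}:=\frac{b_i/b_j}{1+a_i/a_j}$ satisfies $\phi_{ij}\le C\mu^{|i-j|}$ for some $C>0$, $\mu\in(0,1)$. *)

theory Defs
  imports "HOL-Analysis.Analysis"
begin

text \<open>The sequence spaces X: l^p (1 <= p < infinity), l^infinity, c, c_0.
  Sequences are indexed from 0 (the paper indexes from 1).\<close>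

datatype seq_space = Lp real | Linf | Cconv | Czero

fun in_seq_space :: "seq_space \<Rightarrow> (nat \<Rightarrow> real) \<Rightarrow> bool" where
  "in_seq_space (Lp p) x = summable (\<lambda>n. \<bar>x n\<bar> powr p)"
| "in_seq_space Linf x = Bseq x"
| "in_seq_space Cconv x = convergent x"
| "in_seq_space Czero x = (x \<longlonglongrightarrow> 0)"

fun valid_space :: "seq_space \<Rightarrow> bool" where
  "valid_space (Lp p) = (1 \<le> p)"
| "valid_space _ = True"

definition pi_factor :: "(nat \<Rightarrow> real) \<Rightarrow> nat \<Rightarrow> nat \<Rightarrow> real" where
  "pi_factor a n m = (if m = n then 1 else (1 + a m / a n) / (1 - a m / a n))"

definition pi_seq :: "(nat \<Rightarrow> real) \<Rightarrow> nat \<Rightarrow> real" where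
  "pi_seq a n = 2 * prodinf (pi_factor a n)"

definition phi :: "(nat \<Rightarrow> real) \<Rightarrow> (nat \<Rightarrow> real) \<Rightarrow> nat \<Rightarrow> nat \<Rightarrow> real" where
  "phi a b i j = (b i / b j) / (1 + a i / a j)"

end

theory Submission
  imports Defs
begin

(* Partial fractions give, for distinct x_m,
     prod_{m<N} (z + x_m) / (z - x_m) = 1 + sum_{i<N} x_i pi^N_i / (z - x_i),
   where pi^N_i = 2 prod_{m<N, m<>i} (x_i + x_m) / (x_i - x_m) is the truncated product
   defining pi_i. At z = -a_j with j < N the left side vanishes, which is the theorem with
   all sums cut off at N. Letting N -> infinity is Tannery's theorem: every factor of pi_i
   has modulus at least 1, so |pi^N_i| <= |pi_i| stays bounded, and the convergence of the
   product pi_0 forces sum_m a_m < infinity, a summable majorant. *)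

lemma partial_fraction_step:
  fixes c x y z :: "'a::field"
  assumes "z \<noteq> x" "z \<noteq> y" "x \<noteq> y"
  shows "c / (z - x) * ((z + y) / (z - y))
       = c * ((x + y) / (x - y)) / (z - x) + 2 * y * (c / (y - x)) / (z - y)"
proof -
  have "z - x \<noteq> 0" "z - y \<noteq> 0" "x - y \<noteq> 0" "y - x \<noteq> 0" using assms by auto
  then show ?thesis by (simp add: divide_simps) (simp add: algebra_simps)
qed

lemma prod_partial_fractions:
  fixes x :: "nat \<Rightarrow> 'a::field"
  assumes "inj_on x {..<N}" "\<And>i. i < N \<Longrightarrow> z \<noteq> x i"
  shows "(\<Prod>m<N. (z + x m) / (z - x m))
       = 1 + (\<Sum>i<N. 2 * x i * (\<Prod>m\<in>{..<N} - {i}. (x i + x m) / (x i - x m)) / (z - x i))"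
  using assms
proof (induction N arbitrary: z)
  case 0
  then show ?case by simp
next
  case (Suc N)
  define y where "y = x N"
  define c where "c i = 2 * x i * (\<Prod>m\<in>{..<N} - {i}. (x i + x m) / (x i - x m))" for i
  have inj: "inj_on x {..<N}" using Suc.prems(1) by (rule inj_on_subset) auto
  have xy: "x i \<noteq> y" if "i < N" for i
    using Suc.prems(1) that unfolding y_def by (auto dest: inj_onD)
  have zy: "z \<noteq> y" and zx: "\<And>i. i < N \<Longrightarrow> z \<noteq> x i"
    using Suc.prems(2) unfolding y_def by auto
  have IH_z: "(\<Prod>m<N. (z + x m) / (z - x m)) = 1 + (\<Sum>i<N. c i / (z - x i))"
    unfolding c_def using Suc.IH[OF inj zx] .
  have IH_y: "(\<Prod>m<N. (y + x m) / (y - x m)) = 1 + (\<Sum>i<N. c i / (y - x i))"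
    unfolding c_def by (rule Suc.IH[OF inj]) (use xy in fastforce)
  have c_Suc: "2 * x i * (\<Prod>m\<in>{..<Suc N} - {i}. (x i + x m) / (x i - x m))
             = c i * ((x i + y) / (x i - y))" if "i < N" for i
  proof -
    have "{..<Suc N} - {i} = insert N ({..<N} - {i})" using that by auto
    then show ?thesis unfolding c_def y_def by (simp add: ac_simps)
  qed
  have c_N: "2 * y * (\<Prod>m\<in>{..<Suc N} - {N}. (y + x m) / (y - x m))
           = 2 * y * (1 + (\<Sum>i<N. c i / (y - x i)))"
    using IH_y by (simp add: lessThan_Suc)
  have split_z: "(z + y) / (z - y) = 1 + 2 * y / (z - y)"
    using zy by (simp add: field_simps)
  have sum_z: "(\<Sum>i<N. c i / (z - x i) * ((z + y) / (z - y)))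
      = (\<Sum>i<N. c i * ((x i + y) / (x i - y)) / (z - x i) + 2 * y * (c i / (y - x i)) / (z - y))"
    by (intro sum.cong refl partial_fraction_step zx zy xy) simp_all
  have sum_y: "(\<Sum>i<N. 2 * y * (c i / (y - x i)) / (z - y)) = 2 * y * (\<Sum>i<N. c i / (y - x i)) / (z - y)"
    by (simp only: sum_divide_distrib[symmetric] sum_distrib_left[symmetric])
  have "(\<Prod>m<Suc N. (z + x m) / (z - x m)) = (1 + (\<Sum>i<N. c i / (z - x i))) * ((z + y) / (z - y))"
    using IH_z unfolding y_def by simp
  also have "\<dots> = (z + y) / (z - y) + (\<Sum>i<N. c i / (z - x i) * ((z + y) / (z - y)))"
    by (simp only: distrib_right sum_distrib_right mult_1_left)
  also have "\<dots> = 1 + 2 * y / (z - y)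
      + (\<Sum>i<N. c i * ((x i + y) / (x i - y)) / (z - x i) + 2 * y * (c i / (y - x i)) / (z - y))"
    by (subst sum_z) (simp only: split_z)
  also have "\<dots> = 1 + ((\<Sum>i<N. c i * ((x i + y) / (x i - y)) / (z - x i))
      + 2 * y * (1 + (\<Sum>i<N. c i / (y - x i))) / (z - y))"
    by (simp only: sum.distrib sum_y) (simp add: add_divide_distrib distrib_left ac_simps)
  also have "\<dots> = 1 + (\<Sum>i<Suc N. 2 * x i * (\<Prod>m\<in>{..<Suc N} - {i}. (x i + x m) / (x i - x m)) / (z - x i))"
    unfolding sum.lessThan_Suc y_def[symmetric] c_N by (simp add: c_Suc)
  finally show ?case .
qed

definition pi_partial :: "(nat \<Rightarrow> real) \<Rightarrow> nat \<Rightarrow> nat \<Rightarrow> real" where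
  "pi_partial a N n = 2 * (\<Prod>m<N. pi_factor a n m)"

lemma pi_factor_eq:
  assumes "m \<noteq> n" "a n \<noteq> 0"
  shows "pi_factor a n m = (a n + a m) / (a n - a m)"
  using assms by (simp add: pi_factor_def divide_simps)

lemma pi_partial_eq_prod:
  assumes "a n \<noteq> 0"
  shows "pi_partial a N n = 2 * (\<Prod>m\<in>{..<N} - {n}. (a n + a m) / (a n - a m))"
proof -
  have "(\<Prod>m<N. pi_factor a n m) = (\<Prod>m\<in>{..<N} - {n}. pi_factor a n m)"
    by (rule prod.mono_neutral_right) (auto simp: pi_factor_def)
  also have "\<dots> = (\<Prod>m\<in>{..<N} - {n}. (a n + a m) / (a n - a m))"
    using assms by (intro prod.cong refl pi_factor_eq) auto
  finally show ?thesis by (simp add: pi_partial_def)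
qed

lemma sum_pi_partial_eq_1:
  fixes a :: "nat \<Rightarrow> real"
  assumes a_pos: "\<And>n. a n > 0" and inj: "inj_on a {..<N}" and "j < N"
  shows "(\<Sum>i<N. a i * pi_partial a N i / (a i + a j)) = 1"
proof -
  have "0 = (\<Prod>m<N. (- a j + a m) / (- a j - a m))"
    using \<open>j < N\<close> by (intro prod_zero[symmetric]) auto
  also have "\<dots> = 1 + (\<Sum>i<N. 2 * a i * (\<Prod>m\<in>{..<N} - {i}. (a i + a m) / (a i - a m)) / (- a j - a i))"
  proof (rule prod_partial_fractions[OF inj])
    show "- a j \<noteq> a i" for i
      using a_pos[of i] a_pos[of j] by linarith
  qed
  also have "\<dots> = 1 - (\<Sum>i<N. a i * pi_partial a N i / (a i + a j))"
  proof -
    have "2 * a i * (\<Prod>m\<in>{..<N} - {i}. (a i + a m) / (a i - a m)) / (- a j - a i)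
        = - (a i * pi_partial a N i / (a i + a j))" for i
      using a_pos[of i] a_pos[of j] by (simp add: pi_partial_eq_prod field_simps)
    then show ?thesis by (simp add: sum_negf[symmetric])
  qed
  finally show ?thesis by simp
qed

lemma norm_prod_le_norm_prodinf:
  fixes f :: "nat \<Rightarrow> 'a::real_normed_field"
  assumes "convergent_prod f" "\<And>m. 1 \<le> norm (f m)"
  shows "norm (\<Prod>m<n. f m) \<le> norm (prodinf f)"
proof (rule incseq_le)
  show "incseq (\<lambda>n. norm (\<Prod>m<n. f m))"
  proof (rule incseq_SucI)
    fix n
    have "norm (\<Prod>m<n. f m) * 1 \<le> norm (\<Prod>m<n. f m) * norm (f n)"
      using assms(2) by (intro mult_left_mono) auto
    then show "norm (\<Prod>m<n. f m) \<le> norm (\<Prod>m<Suc n. f m)"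
      by (simp add: norm_mult)
  qed
  have "(\<lambda>n. \<Prod>m<n. f m) \<longlonglongrightarrow> prodinf f"
    using convergent_prod_LIMSEQ[OF assms(1)] by (simp add: LIMSEQ_lessThan_iff_atMost)
  then show "(\<lambda>n. norm (\<Prod>m<n. f m)) \<longlonglongrightarrow> norm (prodinf f)"
    by (rule tendsto_norm)
qed

lemma abs_pi_factor_ge_1:
  fixes a :: "nat \<Rightarrow> real"
  assumes "\<And>n. a n > 0" "inj a"
  shows "1 \<le> \<bar>pi_factor a n m\<bar>"
proof (cases "m = n")
  case False
  then have "a m \<noteq> a n" using assms(2) by (auto dest: injD)
  then have "\<bar>a n - a m\<bar> \<le> \<bar>a n + a m\<bar>" "\<bar>a n - a m\<bar> > 0"
    using assms(1)[of m] assms(1)[of n] by auto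
  then show ?thesis
    using False assms(1)[of n] by (simp add: pi_factor_eq abs_divide le_divide_eq)
qed (simp add: pi_factor_def)

lemma pi_partial_LIMSEQ:
  assumes "convergent_prod (pi_factor a n)"
  shows "(\<lambda>N. pi_partial a N n) \<longlonglongrightarrow> pi_seq a n"
  using convergent_prod_LIMSEQ[OF assms]
  unfolding pi_partial_def pi_seq_def LIMSEQ_lessThan_iff_atMost[symmetric]
  by (intro tendsto_mult tendsto_const)

lemma abs_pi_partial_le:
  fixes a :: "nat \<Rightarrow> real"
  assumes "\<And>n. a n > 0" "inj a" "convergent_prod (pi_factor a n)"
  shows "\<bar>pi_partial a N n\<bar> \<le> \<bar>pi_seq a n\<bar>"
proof -
  have "\<bar>\<Prod>m<N. pi_factor a n m\<bar> \<le> \<bar>prodinf (pi_factor a n)\<bar>"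
    using norm_prod_le_norm_prodinf[OF assms(3)] abs_pi_factor_ge_1[OF assms(1,2)] by simp
  then show ?thesis by (simp add: pi_partial_def pi_seq_def abs_mult)
qed

lemma convergent_prod_pi_factor_imp_summable:
  fixes a :: "nat \<Rightarrow> real"
  assumes a_pos: "\<And>m. a m > 0" and a_max: "\<And>m. m \<noteq> n \<Longrightarrow> a m < a n"
    and conv: "convergent_prod (pi_factor a n)"
  shows "summable a"
proof -
  have factor_minus_1: "pi_factor a n m - 1 = 2 * a m / (a n - a m)" if "m \<noteq> n" for m
    using that a_max[OF that] a_pos[of n] by (simp add: pi_factor_eq field_simps)
  have "pi_factor a n m \<ge> 1" for m
    using factor_minus_1[of m] a_max[of m] a_pos[of m] by (cases "m = n") (auto simp: pi_factor_def)
  then have "abs_convergent_prod (pi_factor a n)"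
    using conv unfolding abs_convergent_prod_def by simp
  then have "summable (\<lambda>m. a n / 2 * \<bar>pi_factor a n m - 1\<bar>)"
    by (intro summable_mult) (use abs_convergent_prod_imp_summable in force)
  moreover have "\<forall>\<^sub>F m in sequentially. norm (a m) \<le> a n / 2 * \<bar>pi_factor a n m - 1\<bar>"
    using eventually_gt_at_top[of n]
  proof eventually_elim
    case (elim m)
    then have "m \<noteq> n" by simp
    have "a m * (a n - a m) \<le> a m * a n"
      using a_pos[of m] by (intro mult_left_mono) auto
    then show ?case
      using a_max[OF \<open>m \<noteq> n\<close>] a_pos[of m] by (simp add: factor_minus_1[OF \<open>m \<noteq> n\<close>] le_divide_eq)
  qed
  ultimately show ?thesis
    by (rule summable_comparison_test_ev[rotated])
qed

lemma sums_of_dominated_finite_sums: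
  fixes F :: "nat \<Rightarrow> nat \<Rightarrow> 'a::{real_normed_algebra, banach}"
  assumes lim: "\<And>k. (\<lambda>n. F n k) \<longlonglongrightarrow> g k"
    and bound: "\<And>n k. norm (F n k) \<le> M k" and "summable M"
    and eventually_s: "\<forall>\<^sub>F n in sequentially. (\<Sum>k<n. F n k) = s"
  shows "g sums s"
proof -
  define f where "f k n = (if k < n then F n k else 0)" for k n
  have lim_f: "(\<lambda>n. f k n) \<longlonglongrightarrow> g k" for k
  proof (rule Lim_transform_eventually[OF lim])
    show "\<forall>\<^sub>F n in sequentially. F n k = f k n"
      using eventually_gt_at_top[of k] by eventually_elim (simp add: f_def)
  qed
  have "\<forall>\<^sub>F (k, n) in at_top \<times>\<^sub>F sequentially. norm (f k n) \<le> M k"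
    using bound order_trans[OF norm_ge_zero bound] by (intro always_eventually) (auto simp: f_def)
  then have tannery: "summable (\<lambda>k. norm (g k)) \<and> (\<lambda>n. \<Sum>k. f k n) \<longlonglongrightarrow> suminf g"
    using tannerys_theorem[OF lim_f _ \<open>summable M\<close>] by simp
  have "(\<Sum>k. f k n) = (\<Sum>k<n. F n k)" for n
    by (subst suminf_finite[of "{..<n}"]) (auto simp: f_def)
  then have "(\<lambda>n. \<Sum>k. f k n) \<longlonglongrightarrow> s"
    using eventually_s by (auto intro: tendsto_eventually)
  then have "suminf g = s"
    using tannery LIMSEQ_unique by blast
  with tannery show ?thesis
    using summable_norm_cancel summable_sums by blast
qed

lemma abs_pi_partial_term_le:
  fixes a :: "nat \<Rightarrow> real"
  assumes a_pos: "\<And>n. a n > 0" and "inj a" "convergent_prod (pi_factor a k)"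
    and "\<bar>pi_seq a k\<bar> \<le> B"
  shows "\<bar>a k * pi_partial a N k / (a k + a j)\<bar> \<le> B / a j * a k"
proof -
  have "\<bar>pi_partial a N k\<bar> \<le> B"
    using abs_pi_partial_le[OF assms(1-3)] assms(4) by (rule order_trans)
  then have "a k * \<bar>pi_partial a N k\<bar> / (a k + a j) \<le> a k * B / a j"
    using a_pos[of k] a_pos[of j] by (intro frac_le mult_left_mono) auto
  then show ?thesis
    using a_pos[of k] a_pos[of j] by (simp add: abs_mult mult.commute)
qed

lemma pi_seq_weighted_sums_1:
  fixes a :: "nat \<Rightarrow> real"
  assumes a_pos: "\<And>n. a n > 0" and a_dec: "\<And>n. a (Suc n) < a n"
    and pi_conv: "\<And>n. convergent_prod (pi_factor a n)" and pi_bdd: "Bseq (pi_seq a)"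
  shows "(\<lambda>i. a i * pi_seq a i / (a i + a j)) sums 1"
proof -
  have a_less: "a n < a m" if "m < n" for m n
    using lift_Suc_mono_less[of "\<lambda>n. - a n"] a_dec that by force
  then have inj: "inj a"
    by (metis injI linorder_neqE_nat less_irrefl)
  have "summable a"
    using a_pos _ pi_conv[of 0] by (rule convergent_prod_pi_factor_imp_summable) (simp add: a_less)
  obtain B where B: "\<And>n. \<bar>pi_seq a n\<bar> \<le> B"
    using pi_bdd by (auto simp: Bseq_def)
  show ?thesis
  proof (rule sums_of_dominated_finite_sums[where F = "\<lambda>N k. a k * pi_partial a N k / (a k + a j)"
        and M = "\<lambda>k. B / a j * a k"])
    show "(\<lambda>N. a k * pi_partial a N k / (a k + a j)) \<longlonglongrightarrow> a k * pi_seq a k / (a k + a j)" for k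
      using a_pos[of k] a_pos[of j] by (intro tendsto_intros pi_partial_LIMSEQ pi_conv) auto
    show "norm (a k * pi_partial a N k / (a k + a j)) \<le> B / a j * a k" for N k
      using abs_pi_partial_term_le[OF a_pos inj pi_conv B] by simp
    show "summable (\<lambda>k. B / a j * a k)"
      using \<open>summable a\<close> by (rule summable_mult)
    show "\<forall>\<^sub>F N in sequentially. (\<Sum>k<N. a k * pi_partial a N k / (a k + a j)) = 1"
      using eventually_gt_at_top[of j]
      by eventually_elim (rule sum_pi_partial_eq_1[OF a_pos inj_on_subset[OF inj]], auto)
  qed
qed

theorem mainTheorem13:
  fixes X :: seq_space and a b :: "nat \<Rightarrow> real"
  assumes X: "valid_space X"
    and a_pos: "\<And>n. a n > 0"
    and a_dec: "\<And>n. a (Suc n) < a n"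
    and a_lim: "a \<longlonglongrightarrow> 0"
    and b_X: "in_seq_space X b"
    and b_pos: "\<And>n. b n > 0"
    and pi_conv: "\<And>n. convergent_prod (pi_factor a n)"
    and pi_bdd: "Bseq (pi_seq a)"
    and phi_bd: "\<exists>C > 0. \<exists>\<mu>. 0 < \<mu> \<and> \<mu> < 1 \<and>
                   (\<forall>i j. phi a b i j \<le> C * \<mu> ^ (max i j - min i j))"
  shows "\<forall>j. (\<lambda>i. a i * pi_seq a i / (a i + a j)) sums 1"
  using pi_seq_weighted_sums_1[OF a_pos a_dec pi_conv pi_bdd] by blast

end
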